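(* Let $K\ge1$, $N>0$, $P_{\max}>0$, and for $k=1,\dots,K$ let $a_k:=(\rho_{g,k}\rho_{r,kL})^2>0$ and $\Gamma_k=\frac{M a_k}{\sigma^2}c_b^2$ with $c_b=\frac{2^b}{\pi}\sin\frac{\pi}{2^b}$. Consider the problem $$\max_{\{p_k\},\{\tilde N_k\}}\ \min_{k\in\{1,\dots,K\}}\ \log_2\!\left(1+p_k\Gamma_k\tilde N_k^2\right)\quad\text{s.t.}\quad \sum_{k=1}^K p_k=P_{\max},\ \sum_{k=1}^K\tilde N_k=N,\ p_k\ge0,\ \tilde N_k\ge0.$$ Its optimal solution is $$\tilde N_k^*=\frac{\left(2a_k^{-1}\right)^{1/3}N}{\sum_{j=1}^K\left(2a_j^{-1}\right)^{1/3}},\qquad p_k^*=\frac{P_{\max}\left(\rho_{g,k}\rho_{r,kL}\tilde N_k^*\right)^{-2}}{\sum_{j=1}^K\left(\rho_{g,j}\rho_{r,jL}\tilde N_j^*\right)^{-2}},\quad k=1,\dots,K.$$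
   Context: Interpretation: a base station with $M$ antennas serves $K$ user clusters, cluster $k$ aided by a local IRS with $\tilde N_k$ elements (relaxed to a continuous value) with $b$-bit phase quantization; $p_k$ is the power allocated to the representative user $u_L^k$ of cluster $k$, $(\rho_{g,k}\rho_{r,kL})^2$ its concatenated BS–IRS–user path loss, $\sigma^2$ the noise power; under pure LoS channels and interference-free transmission its rate is $\log_2(1+p_k\Gamma_k\tilde N_k^2)$. *)

theory Defs
  imports Complex_Main
begin

definition c_b :: "nat \<Rightarrow> real" where
  "c_b b = 2 ^ b / pi * sin (pi / 2 ^ b)"

definition Gamma :: "nat \<Rightarrow> real \<Rightarrow> nat \<Rightarrow> real \<Rightarrow> real" where
  "Gamma M sigma2 b a = real M * a / sigma2 * (c_b b)\<^sup>2"

definition feasible :: "nat \<Rightarrow> real \<Rightarrow> real \<Rightarrow> (nat \<Rightarrow> real) \<Rightarrow> (nat \<Rightarrow> real) \<Rightarrow> bool" where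
  "feasible K N Pmax p Nt \<longleftrightarrow>
     (\<Sum>k=1..K. p k) = Pmax \<and> (\<Sum>k=1..K. Nt k) = N \<and>
     (\<forall>k\<in>{1..K}. p k \<ge> 0 \<and> Nt k \<ge> 0)"

definition min_rate :: "nat \<Rightarrow> (nat \<Rightarrow> real) \<Rightarrow> (nat \<Rightarrow> real) \<Rightarrow> (nat \<Rightarrow> real) \<Rightarrow> real" where
  "min_rate K G p Nt = Min ((\<lambda>k. log 2 (1 + p k * G k * (Nt k)\<^sup>2)) ` {1..K})"

end

theory Submission
  imports Defs
begin

text \<open>Since \<open>\<Gamma>\<^sub>k\<close> is a fixed positive multiple of \<open>a\<^sub>k\<close>, it suffices to balance the products
  \<open>p\<^sub>k a\<^sub>k \<tilde>N\<^sub>k\<^sup>2\<close>. Write \<open>a\<^sub>k = 2 / d\<^sub>k\<^sup>3\<close> with \<open>d\<^sub>k = (2/a\<^sub>k)\<^sup>1\<^sup>/\<^sup>3\<close> and \<open>D = \<Sum> d\<^sub>k\<close>.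
  If every \<open>p\<^sub>k \<tilde>N\<^sub>k\<^sup>2 / d\<^sub>k\<^sup>3\<close> exceeded \<open>t = P N\<^sup>2 / D\<^sup>3\<close>, then
  \<open>P = \<Sum> p\<^sub>k > t \<Sum> d\<^sub>k\<^sup>3 / \<tilde>N\<^sub>k\<^sup>2 \<ge> t D\<^sup>3 / N\<^sup>2 = P\<close>, by the Hoelder-type inequality
  \<open>(\<Sum> d)\<^sup>3 / (\<Sum> x)\<^sup>2 \<le> \<Sum> d\<^sup>3 / x\<^sup>2\<close>, which is a sum of tangent-line bounds of the convex
  function \<open>x \<mapsto> d\<^sup>3 / x\<^sup>2\<close>. The allocation \<open>\<tilde>N\<^sub>k = d\<^sub>k N / D\<close>, \<open>p\<^sub>k = P d\<^sub>k / D\<close> makes every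
  ratio equal to \<open>t\<close>, so it attains this bound.\<close>

lemma tangent_le_cube_div_square:
  fixes c r x :: real
  assumes "c \<ge> 0" "r \<ge> 0" "x > 0"
  shows "3 * r\<^sup>2 * c - 2 * r ^ 3 * x \<le> c ^ 3 / x\<^sup>2"
proof -
  have "0 \<le> (c - r * x)\<^sup>2 * (c + 2 * r * x)"
    using assms by simp
  also have "\<dots> = c ^ 3 - (3 * r\<^sup>2 * c - 2 * r ^ 3 * x) * x\<^sup>2"
    by (simp add: algebra_simps power2_eq_square power3_eq_cube)
  finally show ?thesis
    using assms by (simp add: field_simps)
qed

lemma sum_cube_div_square_ge:
  fixes d x :: "'a \<Rightarrow> real"
  assumes "finite S" and "\<And>k. k \<in> S \<Longrightarrow> d k \<ge> 0 \<and> x k > 0"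
  shows "(sum d S) ^ 3 / (sum x S)\<^sup>2 \<le> (\<Sum>k\<in>S. d k ^ 3 / (x k)\<^sup>2)"
proof (cases "S = {}")
  case False
  have X: "sum x S > 0"
    using assms False by (intro sum_pos) auto
  define r where "r = sum d S / sum x S"
  have "r \<ge> 0"
    unfolding r_def using assms X by (simp add: sum_nonneg)
  have "(sum d S) ^ 3 / (sum x S)\<^sup>2 = 3 * r\<^sup>2 * sum d S - 2 * r ^ 3 * sum x S"
    using X unfolding r_def by (simp add: field_simps power2_eq_square power3_eq_cube)
  also have "\<dots> = (\<Sum>k\<in>S. 3 * r\<^sup>2 * d k - 2 * r ^ 3 * x k)"
    by (simp add: sum_subtractf sum_distrib_left)
  also have "\<dots> \<le> (\<Sum>k\<in>S. d k ^ 3 / (x k)\<^sup>2)"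
    using assms \<open>r \<ge> 0\<close> by (intro sum_mono tangent_le_cube_div_square) auto
  finally show ?thesis .
qed simp

lemma ex_mult_square_div_cube_le:
  fixes d p x :: "'a \<Rightarrow> real"
  assumes "finite S" "S \<noteq> {}"
    and "\<And>k. k \<in> S \<Longrightarrow> d k > 0 \<and> p k \<ge> 0 \<and> x k \<ge> 0"
  shows "\<exists>k\<in>S. p k * (x k)\<^sup>2 / d k ^ 3 \<le> sum p S * (sum x S)\<^sup>2 / (sum d S) ^ 3"
proof (rule ccontr)
  define t where "t = sum p S * (sum x S)\<^sup>2 / (sum d S) ^ 3"
  assume "\<not> ?thesis"
  then have above: "t < p k * (x k)\<^sup>2 / d k ^ 3" if "k \<in> S" for k
    using that unfolding t_def by auto
  have D: "sum d S > 0"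
    using assms by (intro sum_pos) auto
  have "t \<ge> 0"
    unfolding t_def using assms D by (simp add: sum_nonneg)
  have x_pos: "x k > 0" if "k \<in> S" for k
    using above[OF that] \<open>t \<ge> 0\<close> assms(3)[OF that] by (cases "x k = 0") auto
  have "t * d k ^ 3 / (x k)\<^sup>2 < p k" if "k \<in> S" for k
    using above[OF that] x_pos[OF that] assms(3)[OF that] by (simp add: field_simps)
  then have "(\<Sum>k\<in>S. t * d k ^ 3 / (x k)\<^sup>2) < sum p S"
    using assms by (intro sum_strict_mono) auto
  moreover have "sum p S \<le> (\<Sum>k\<in>S. t * d k ^ 3 / (x k)\<^sup>2)"
  proof -
    have X: "sum x S > 0"
      using assms x_pos by (intro sum_pos) auto
    have "sum p S = t * ((sum d S) ^ 3 / (sum x S)\<^sup>2)"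
      unfolding t_def using D X by simp
    also have "\<dots> \<le> t * (\<Sum>k\<in>S. d k ^ 3 / (x k)\<^sup>2)"
      using \<open>t \<ge> 0\<close> assms x_pos
      by (intro mult_left_mono sum_cube_div_square_ge) (auto simp: less_imp_le)
    finally show ?thesis
      by (simp add: sum_distrib_left)
  qed
  ultimately show False
    by simp
qed

lemma min_rate_le:
  assumes "k \<in> {1..K}" and "0 \<le> p k * G k * (Nt k)\<^sup>2" and "p k * G k * (Nt k)\<^sup>2 \<le> v"
  shows "min_rate K G p Nt \<le> log 2 (1 + v)"
proof -
  have "min_rate K G p Nt \<le> log 2 (1 + p k * G k * (Nt k)\<^sup>2)"
    unfolding min_rate_def using assms(1) by (intro Min_le) auto
  also have "\<dots> \<le> log 2 (1 + v)"
    using assms(2,3) by simp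
  finally show ?thesis .
qed

lemma min_rate_const:
  assumes "K \<ge> 1" and "\<And>k. k \<in> {1..K} \<Longrightarrow> p k * G k * (Nt k)\<^sup>2 = v"
  shows "min_rate K G p Nt = log 2 (1 + v)"
proof -
  have "(\<lambda>k. log 2 (1 + p k * G k * (Nt k)\<^sup>2)) ` {1..K} = {log 2 (1 + v)}"
    using assms by auto
  then show ?thesis
    unfolding min_rate_def by simp
qed

lemma feasible_proportional_allocation:
  fixes K :: nat and N P :: real and d p x :: "nat \<Rightarrow> real"
  defines "D \<equiv> \<Sum>j=1..K. d j"
  assumes "K \<ge> 1" and "N \<ge> 0" and "P \<ge> 0" and d_pos: "\<And>k. k \<in> {1..K} \<Longrightarrow> d k > 0"
    and px: "\<And>k. k \<in> {1..K} \<Longrightarrow> p k = P * d k / D \<and> x k = d k * N / D"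
  shows "feasible K N P p x"
proof -
  have "D > 0"
    unfolding D_def using \<open>K \<ge> 1\<close> d_pos by (intro sum_pos) auto
  have "(\<Sum>k=1..K. p k) = (\<Sum>k=1..K. P * d k / D)" and "(\<Sum>k=1..K. x k) = (\<Sum>k=1..K. d k * N / D)"
    using px by simp_all
  moreover have "(\<Sum>k=1..K. P * d k / D) = P" and "(\<Sum>k=1..K. d k * N / D) = N"
    using \<open>D > 0\<close> unfolding D_def
    by (simp_all add: sum_divide_distrib[symmetric] sum_distrib_left[symmetric]
        sum_distrib_right[symmetric])
  moreover have "p k \<ge> 0 \<and> x k \<ge> 0" if "k \<in> {1..K}" for k
    using \<open>N \<ge> 0\<close> \<open>P \<ge> 0\<close> d_pos[OF that] px[OF that] \<open>D > 0\<close> by simp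
  ultimately show ?thesis
    unfolding feasible_def by simp
qed

lemma proportional_allocation_max_min:
  fixes K :: nat and N P c :: real and d G pstar xstar :: "nat \<Rightarrow> real"
  defines "D \<equiv> \<Sum>j=1..K. d j"
  assumes "K \<ge> 1" and "N \<ge> 0" and "P \<ge> 0" and "c > 0"
    and d_pos: "\<And>k. k \<in> {1..K} \<Longrightarrow> d k > 0"
    and G_eq: "\<And>k. k \<in> {1..K} \<Longrightarrow> G k = c / d k ^ 3"
    and star: "\<And>k. k \<in> {1..K} \<Longrightarrow> pstar k = P * d k / D \<and> xstar k = d k * N / D"
  shows "feasible K N P pstar xstar \<and>
         (\<forall>p x. feasible K N P p x \<longrightarrow> min_rate K G p x \<le> min_rate K G pstar xstar)"
proof -
  define T where "T = P * N\<^sup>2 / D ^ 3"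
  have "D > 0"
    unfolding D_def using \<open>K \<ge> 1\<close> d_pos by (intro sum_pos) auto
  have rate_eq: "p k * G k * (x k)\<^sup>2 = c * (p k * (x k)\<^sup>2 / d k ^ 3)" if "k \<in> {1..K}" for p x k
    by (simp add: G_eq[OF that])
  have "min_rate K G pstar xstar = log 2 (1 + c * T)"
  proof (rule min_rate_const[OF \<open>K \<ge> 1\<close>])
    fix k assume k: "k \<in> {1..K}"
    show "pstar k * G k * (xstar k)\<^sup>2 = c * T"
      using d_pos[OF k] \<open>D > 0\<close> unfolding rate_eq[OF k] T_def
      by (simp add: star[OF k] field_simps power2_eq_square power3_eq_cube)
  qed
  moreover have "min_rate K G p x \<le> log 2 (1 + c * T)" if "feasible K N P p x" for p x
  proof -
    have nonneg: "p k \<ge> 0 \<and> x k \<ge> 0" if "k \<in> {1..K}" for k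
      using \<open>feasible K N P p x\<close> that unfolding feasible_def by blast
    obtain k where k: "k \<in> {1..K}" and le_T: "p k * (x k)\<^sup>2 / d k ^ 3 \<le> T"
      using ex_mult_square_div_cube_le[of "{1..K}" d p x] \<open>K \<ge> 1\<close> d_pos nonneg
        \<open>feasible K N P p x\<close> unfolding feasible_def T_def D_def by auto
    show ?thesis
    proof (rule min_rate_le[OF k])
      show "0 \<le> p k * G k * (x k)\<^sup>2"
        unfolding rate_eq[OF k] using nonneg[OF k] d_pos[OF k] \<open>c > 0\<close> by simp
      show "p k * G k * (x k)\<^sup>2 \<le> c * T"
        unfolding rate_eq[OF k] using \<open>c > 0\<close> le_T by (intro mult_left_mono) auto
    qed
  qed
  moreover have "feasible K N P pstar xstar"
    using assms(2-4) d_pos star unfolding D_def by (rule feasible_proportional_allocation)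
  ultimately show ?thesis
    by simp
qed

lemma proportional_share_eq:
  fixes c :: real
  assumes "\<And>j. j \<in> I \<Longrightarrow> w j = c * d j" and "c \<noteq> 0" and "k \<in> I"
  shows "P * w k / sum w I = P * d k / sum d I"
  using assms by (simp add: sum_distrib_left[symmetric])

lemma cube_root_weight:
  fixes a :: real
  assumes "a > 0"
  shows "(2 / a) powr (1/3) > 0" and "a = 2 / ((2 / a) powr (1/3)) ^ 3"
  using assms by (simp_all add: powr_realpow[symmetric] powr_powr)

lemma c_b_pos:
  assumes "b \<ge> 1"
  shows "c_b b > 0"
proof -
  have "(2::real) ^ b \<ge> 2 ^ 1"
    using assms by (intro power_increasing) auto
  then have "sin (pi / 2 ^ b) > 0"
    by (intro sin_gt_zero) (auto simp: divide_less_eq)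
  then show ?thesis
    unfolding c_b_def by simp
qed

lemma Gamma_eq_mult: "Gamma M sigma2 b a = real M / sigma2 * (c_b b)\<^sup>2 * a"
  unfolding Gamma_def by simp

theorem proposition4:
  fixes K M b :: nat and N Pmax sigma2 :: real and rho_g rho_r :: "nat \<Rightarrow> real"
    and a G Nstar pstar :: "nat \<Rightarrow> real"
  assumes "K \<ge> 1" and "M \<ge> 1" and "b \<ge> 1" and "sigma2 > 0"
    and "N > 0" and "Pmax > 0"
    and "\<forall>k\<in>{1..K}. (rho_g k * rho_r k)\<^sup>2 > 0"
  defines "a \<equiv> \<lambda>k. (rho_g k * rho_r k)\<^sup>2"
    and "G \<equiv> \<lambda>k. Gamma M sigma2 b (a k)"
    and "Nstar \<equiv> \<lambda>k. (2 / a k) powr (1/3) * N / (\<Sum>j=1..K. (2 / a j) powr (1/3))"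
    and "pstar \<equiv> \<lambda>k. Pmax * (1 / (rho_g k * rho_r k * Nstar k)\<^sup>2)
                     / (\<Sum>j=1..K. 1 / (rho_g j * rho_r j * Nstar j)\<^sup>2)"
  shows "feasible K N Pmax pstar Nstar \<and>
         (\<forall>p Nt. feasible K N Pmax p Nt \<longrightarrow>
                  min_rate K G p Nt \<le> min_rate K G pstar Nstar)"
proof -
  let ?I = "{1..K}"
  define d where "d k = (2 / a k) powr (1/3)" for k
  define D where "D = (\<Sum>j\<in>?I. d j)"
  define K0 where "K0 = real M / sigma2 * (c_b b)\<^sup>2"
  have d_pos: "d k > 0" and a_eq: "a k = 2 / d k ^ 3" if "k \<in> ?I" for k
    using cube_root_weight[of "a k"] assms(7) that unfolding d_def a_def by auto
  have "D > 0"
    unfolding D_def using assms(1) d_pos by (intro sum_pos) auto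
  have Nstar_eq: "Nstar k = d k * N / D" for k
    unfolding Nstar_def d_def D_def ..
  have inverse_gain: "1 / (rho_g k * rho_r k * Nstar k)\<^sup>2 = D\<^sup>2 / (2 * N\<^sup>2) * d k"
    if "k \<in> ?I" for k
  proof -
    have "(rho_g k * rho_r k * Nstar k)\<^sup>2 = a k * (Nstar k)\<^sup>2"
      unfolding a_def by (simp add: power_mult_distrib)
    also have "\<dots> = 1 / (D\<^sup>2 / (2 * N\<^sup>2) * d k)"
      using d_pos[OF that] \<open>D > 0\<close> assms(5)
      by (simp add: a_eq[OF that] Nstar_eq field_simps power2_eq_square power3_eq_cube)
    finally show ?thesis
      by simp
  qed
  have pstar_eq: "pstar k = Pmax * d k / D" if "k \<in> ?I" for k
    unfolding pstar_def D_def using that \<open>D > 0\<close> assms(5) inverse_gain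
    by (intro proportional_share_eq[where w = "\<lambda>k. 1 / (rho_g k * rho_r k * Nstar k)\<^sup>2"
          and c = "D\<^sup>2 / (2 * N\<^sup>2)"]) auto
  have "K0 > 0"
    unfolding K0_def using assms(2,4) c_b_pos[OF assms(3)] by simp
  moreover have "G k = 2 * K0 / d k ^ 3" if "k \<in> ?I" for k
    unfolding G_def Gamma_eq_mult K0_def a_eq[OF that] by simp
  ultimately show ?thesis
    using assms(1,5,6) d_pos pstar_eq Nstar_eq unfolding D_def
    by (intro proportional_allocation_max_min[where c = "2 * K0"]) auto
qed

end
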